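(* Let $F_1(v)=\frac{1-e^{-v}}{v}$ for real $v\ne0$ and $F_1(0)=1$, and for $j\in\mathbb{N}$ let $G_j(v)=\frac{v^j}{1-e^{-v}}$ for $v\ne0$, $G_j(0)=1$ if $j=1$ and $G_j(0)=0$ if $j>1$; let $f_j=G_j^{(j)}$. For $j\in\mathbb{N}$ and $k\ge0$, \[ G_j^{(k)}(v)=\frac{(-1)^k}{F_1^{k+1}(v)}\det M_{k}(v), \] where $M_k(v)=(m_{i,\ell})_{1\le i,\ell\le k+1}$ is the $(k+1)\times(k+1)$ matrix with first column $m_{i,1}=\langle j-1\rangle_{i-1}v^{j-i}$ ($1\le i\le k+1$) and, for $2\le\ell\le k+1$, $m_{i,\ell}=\binom{i-1}{\ell-2}F_1^{(i-\ell+1)}(v)$ if $i\ge \ell-1$ and $m_{i,\ell}=0$ if $i<\ell-1$. That is, the rows are $(\langle j-1\rangle_0 v^{j-1}, F_1, 0,\dots,0)$, $(\langle j-1\rangle_1 v^{j-2}, F_1', F_1,0,\dots,0)$, $\dots$, $(\langle j-1\rangle_k v^{j-k-1}, F_1^{(k)}, \binom{k}{1}F_1^{(k-1)},\dots,\binom{k}{k-1}F_1')$. In particular, $f_j(v)=\frac{(-1)^j}{F_1^{j+1}(v)}\det M_j(v)$ (whose first column is $(\langle j-1\rangle_0v^{j-1},\dots,\langle j-1\rangle_{j-2}v,(j-1)!,0)^T$), $G_j^{(k)}(0)=0$ for $0\le k<j-1$, and $G_j^{(j-1)}(0)=(j-1)!$, $G_j^{(j)}(0)=f_j(0)=\frac{j!}{2}$,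 $G_j^{(j+1)}(0)=f_j'(0)=\frac{(j+1)!}{12}$, $G_j^{(j+2)}(0)=0$.
   Context: $\mathbb{N}=\{1,2,3,\dots\}$. The falling factorial is $\langle x\rangle_n=x(x-1)\cdots(x-n+1)$ for $n\ge1$, $\langle x\rangle_0=1$; note $\langle j-1\rangle_{n}=0$ for integers $n\ge j$, and entries $\langle j-1\rangle_{i-1}v^{j-i}$ with $i-1\ge j$ are understood to be $0$ (also at $v=0$). $F_1$ and $G_j$ are real-analytic on $(-2\pi,2\pi)$ and $F_1$ has no real zeros. *)

theory Defs
  imports "HOL-Analysis.Derivative" "Jordan_Normal_Form.Determinant"
begin

definition falling :: "real \<Rightarrow> nat \<Rightarrow> real" where
  "falling x n = (\<Prod>i<n. x - real i)"

definition F1 :: "real \<Rightarrow> real" where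
  "F1 v = (if v = 0 then 1 else (1 - exp (- v)) / v)"

definition G :: "nat \<Rightarrow> real \<Rightarrow> real" where
  "G j v = (if v = 0 then (if j = 1 then 1 else 0) else v ^ j / (1 - exp (- v)))"

definition f :: "nat \<Rightarrow> real \<Rightarrow> real" where
  "f j = (deriv ^^ j) (G j)"

text \<open>The (k+1) x (k+1) matrix M_k(v), 0-indexed rows i and columns l in {0..k}.\<close>
definition M :: "nat \<Rightarrow> nat \<Rightarrow> real \<Rightarrow> real mat" where
  "M j k v = mat (k+1) (k+1) (\<lambda>(i, l).
     if l = 0 then (if i < j then falling (real j - 1) i * v ^ (j - 1 - i) else 0)
     else if l - 1 \<le> i then real (i choose (l - 1)) * (deriv ^^ (i + 1 - l)) F1 v
     else 0)"

end

theory Submission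
  imports Defs
begin

(* Since G_j = v^(j-1) / F_1, where F_1 is a nowhere vanishing power series, the Leibniz rule
   applied to G_j F_1 = v^(j-1) gives for i = 0, ..., k

     sum_(l <= i) C(i,l) F_1^(i-l) G_j^(l) = <j-1>_i v^(j-1-i),

   a lower triangular linear system in G_j, ..., G_j^(k) with diagonal F_1. Cramer's rule for the
   last unknown, with the right-hand side column moved to the front (sign (-1)^k), is the
   determinant formula. At v = 0, with F_1^(m)(0) = (-1)^m / (m+1), the system for j = 1 yields
   G_1^(m)(0) = 1, 1/2, 1/6, 0 for m = 0, ..., 3, and G_j = v^(j-1) G_1 turns these into
   G_j^(j-1+m)(0) = (j-1+m)!/m! G_1^(m)(0). *)

definition differentiable_upto :: "nat \<Rightarrow> (real \<Rightarrow> real) \<Rightarrow> bool" where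
  "differentiable_upto n p \<longleftrightarrow>
     (\<forall>m<n. \<forall>x. ((deriv ^^ m) p has_real_derivative (deriv ^^ Suc m) p x) (at x))"

lemma differentiable_upto_0 [simp]: "differentiable_upto 0 p"
  by (simp add: differentiable_upto_def)

lemma differentiable_upto_Suc:
  "differentiable_upto (Suc n) p \<longleftrightarrow>
     (\<forall>x. (p has_real_derivative deriv p x) (at x)) \<and> differentiable_upto n (deriv p)"
  by (auto simp: differentiable_upto_def less_Suc_eq_0_disj funpow_Suc_right
           simp del: funpow.simps)

lemma differentiable_upto_SucI:
  assumes "\<And>x. (p has_real_derivative p' x) (at x)" "differentiable_upto n p'"
  shows "differentiable_upto (Suc n) p"
proof -
  have "deriv p = p'"
    using assms(1) by (intro ext DERIV_imp_deriv)
  with assms show ?thesis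
    by (simp add: differentiable_upto_Suc)
qed

lemma differentiable_upto_mono:
  "differentiable_upto n p \<Longrightarrow> m \<le> n \<Longrightarrow> differentiable_upto m p"
  by (simp add: differentiable_upto_def)

lemma differentiable_upto_const: "differentiable_upto n (\<lambda>x. c)"
  by (induction n arbitrary: c) (auto intro!: differentiable_upto_SucI[where p' = "\<lambda>x. 0"])

lemma differentiable_upto_ident: "differentiable_upto n (\<lambda>x. x)"
  by (cases n) (auto intro: differentiable_upto_SucI[where p' = "\<lambda>x. 1"] differentiable_upto_const)

lemma differentiable_upto_add:
  "differentiable_upto n p \<Longrightarrow> differentiable_upto n q \<Longrightarrow>
    differentiable_upto n (\<lambda>x. p x + q x)"
proof (induction n arbitrary: p q)
  case (Suc n)
  then show ?case
    by (intro differentiable_upto_SucI[where p' = "\<lambda>x. deriv p x + deriv q x"])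
       (auto simp: differentiable_upto_Suc intro!: derivative_eq_intros)
qed simp

lemma differentiable_upto_mult:
  "differentiable_upto n p \<Longrightarrow> differentiable_upto n q \<Longrightarrow>
    differentiable_upto n (\<lambda>x. p x * q x)"
proof (induction n arbitrary: p q)
  case (Suc n)
  have "differentiable_upto n p" "differentiable_upto n q"
       "differentiable_upto n (deriv p)" "differentiable_upto n (deriv q)"
    using Suc.prems differentiable_upto_mono[of "Suc n" _ n] by (auto simp: differentiable_upto_Suc)
  then have "differentiable_upto n (\<lambda>x. deriv p x * q x + p x * deriv q x)"
    by (intro differentiable_upto_add Suc.IH)
  with Suc.prems show ?case
    by (intro differentiable_upto_SucI) (auto simp: differentiable_upto_Suc intro!: derivative_eq_intros)
qed simp

lemma differentiable_upto_inverse: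
  "differentiable_upto n p \<Longrightarrow> (\<And>x. p x \<noteq> 0) \<Longrightarrow>
    differentiable_upto n (\<lambda>x. inverse (p x))"
proof (induction n arbitrary: p)
  case (Suc n)
  have "differentiable_upto n (\<lambda>x. inverse (p x))" "differentiable_upto n (deriv p)"
    using Suc differentiable_upto_mono[of "Suc n" _ n] by (auto simp: differentiable_upto_Suc)
  then have "differentiable_upto n (\<lambda>x. - (deriv p x * (inverse (p x) * inverse (p x))))"
    by (intro differentiable_upto_mult differentiable_upto_const
          differentiable_upto_mult[where p = "\<lambda>x. -1", simplified])
  with Suc.prems show ?case
    by (intro differentiable_upto_SucI)
       (auto simp: differentiable_upto_Suc power2_eq_square intro!: derivative_eq_intros)
qed simp

lemma differentiable_upto_power: "differentiable_upto n (\<lambda>x. x ^ k)"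
  by (induction k) (auto intro: differentiable_upto_mult differentiable_upto_ident differentiable_upto_const)

lemma differentiable_upto_powser:
  fixes c :: "nat \<Rightarrow> real"
  assumes "\<And>y. summable (\<lambda>n. c n * y ^ n)"
  shows "differentiable_upto m (\<lambda>x. \<Sum>n. c n * x ^ n)"
  using assms
proof (induction m arbitrary: c)
  case (Suc m)
  then show ?case
    by (intro differentiable_upto_SucI[OF termdiffs_strong_converges_everywhere] Suc.IH
          termdiff_converges_all)
qed simp

lemma sum_binomial_Pascal:
  fixes a :: "nat \<Rightarrow> nat \<Rightarrow> 'a::comm_semiring_1"
  shows "(\<Sum>i\<le>n. of_nat (n choose i) * (a (Suc i) (n - i) + a i (Suc (n - i))))
         = (\<Sum>i\<le>Suc n. of_nat (Suc n choose i) * a i (Suc n - i))"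
proof -
  have "(\<Sum>i\<le>Suc n. of_nat (n choose i) * a i (Suc n - i))
        = (\<Sum>i\<le>n. of_nat (n choose i) * a i (Suc (n - i)))"
    by (auto simp: Suc_diff_le binomial_eq_0 intro!: sum.cong)
  moreover have "(\<Sum>i\<le>Suc n. of_nat (Suc n choose i) * a i (Suc n - i))
        = (\<Sum>i\<le>Suc n. of_nat (n choose i) * a i (Suc n - i))
          + (\<Sum>i\<le>n. of_nat (n choose i) * a (Suc i) (n - i))"
    by (simp add: sum.atMost_Suc_shift sum.distrib algebra_simps del: sum.atMost_Suc)
  ultimately show ?thesis
    by (simp add: sum.distrib algebra_simps)
qed

lemma higher_deriv_mult_real:
  assumes "differentiable_upto n p" "differentiable_upto n q"
  shows "(deriv ^^ n) (\<lambda>x. p x * q x)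
         = (\<lambda>x. \<Sum>i\<le>n. of_nat (n choose i) * ((deriv ^^ i) p x * (deriv ^^ (n - i)) q x))"
  using assms
proof (induction n)
  case (Suc n)
  have deriv_p: "((deriv ^^ i) p has_real_derivative (deriv ^^ Suc i) p x) (at x)" if "i \<le> n" for i x
    using Suc.prems(1) that by (simp add: differentiable_upto_def)
  have deriv_q: "((deriv ^^ i) q has_real_derivative (deriv ^^ Suc i) q x) (at x)" if "i \<le> n" for i x
    using Suc.prems(2) that by (simp add: differentiable_upto_def)
  have sum_deriv: "((\<lambda>x. \<Sum>i\<le>n. of_nat (n choose i) * ((deriv ^^ i) p x * (deriv ^^ (n - i)) q x))
         has_real_derivative
         (\<Sum>i\<le>n. of_nat (n choose i) * ((deriv ^^ Suc i) p x * (deriv ^^ (n - i)) q x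
                                           + (deriv ^^ i) p x * (deriv ^^ Suc (n - i)) q x))) (at x)"
    for x
    by (intro DERIV_sum DERIV_cmult) (auto intro!: derivative_eq_intros deriv_p deriv_q)
  have IH: "(deriv ^^ n) (\<lambda>x. p x * q x)
         = (\<lambda>x. \<Sum>i\<le>n. of_nat (n choose i) * ((deriv ^^ i) p x * (deriv ^^ (n - i)) q x))"
    using Suc differentiable_upto_mono[of "Suc n" _ n] by simp
  show ?case
  proof (rule ext)
    fix x
    have "(deriv ^^ Suc n) (\<lambda>x. p x * q x) x = deriv ((deriv ^^ n) (\<lambda>x. p x * q x)) x"
      by simp
    also have "\<dots> = (\<Sum>i\<le>n. of_nat (n choose i) * ((deriv ^^ Suc i) p x * (deriv ^^ (n - i)) q x
                                           + (deriv ^^ i) p x * (deriv ^^ Suc (n - i)) q x))"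
      unfolding IH by (rule DERIV_imp_deriv[OF sum_deriv])
    also have "\<dots> = (\<Sum>i\<le>Suc n. of_nat (Suc n choose i) *
                          ((deriv ^^ i) p x * (deriv ^^ (Suc n - i)) q x))"
      by (rule sum_binomial_Pascal[of n "\<lambda>i l. (deriv ^^ i) p x * (deriv ^^ l) q x"])
    finally show "(deriv ^^ Suc n) (\<lambda>x. p x * q x) x = \<dots>" .
  qed
qed simp

lemma falling_Suc: "falling x (Suc n) = falling x n * (x - real n)"
  by (simp add: falling_def)

lemma falling_of_nat_eq_0: "n < i \<Longrightarrow> falling (real n) i = 0"
  unfolding falling_def by (intro prod_zero) (auto intro!: bexI[of _ n])

lemma falling_of_nat_self: "falling (real n) n = fact n"
  unfolding falling_def fact_prod_rev by (auto simp: of_nat_diff lessThan_atLeast0 intro!: prod.cong)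

lemma higher_deriv_power_real:
  "(deriv ^^ i) (\<lambda>v::real. v ^ n) = (\<lambda>v. falling (real n) i * v ^ (n - i))"
proof (induction i)
  case (Suc i)
  have "falling (real n) i * real (n - i) = falling (real n) (Suc i)"
    by (cases "i < n") (auto simp: falling_Suc of_nat_diff falling_of_nat_eq_0)
  moreover have "((\<lambda>v. falling (real n) i * v ^ (n - i)) has_real_derivative
              falling (real n) i * (real (n - i) * v ^ (n - i - Suc 0))) (at v)" for v
    by (intro DERIV_cmult DERIV_pow)
  ultimately have "((\<lambda>v. falling (real n) i * v ^ (n - i)) has_real_derivative
              falling (real n) (Suc i) * v ^ (n - Suc i)) (at v)" for v
    by (simp add: mult.assoc [symmetric])
  with Suc show ?case
    by (auto intro!: ext DERIV_imp_deriv)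
qed (simp add: falling_def)

lemma higher_deriv_power_mult_at_0:
  assumes "differentiable_upto n h"
  shows "(deriv ^^ n) (\<lambda>x. x ^ p * h x) 0
         = (if p \<le> n then real (n choose p) * fact p * (deriv ^^ (n - p)) h 0 else 0)"
proof -
  have "real (n choose i) * (falling (real p) i * 0 ^ (p - i) * (deriv ^^ (n - i)) h 0)
        = (if i = p then real (n choose p) * fact p * (deriv ^^ (n - p)) h 0 else 0)" for i
    by (cases i p rule: linorder_cases) (simp_all add: falling_of_nat_eq_0 falling_of_nat_self)
  then show ?thesis
    by (simp add: higher_deriv_mult_real[OF differentiable_upto_power assms] higher_deriv_power_real)
qed

lemma funpow_diffs: "(diffs ^^ k) c n = fact (n + k) / fact n * (c (n + k) :: real)"
proof (induction k arbitrary: n)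
  case (Suc k)
  have "(diffs ^^ Suc k) c n = real (Suc n) * (diffs ^^ k) c (Suc n)"
    by (simp add: diffs_def)
  also have "\<dots> = real (Suc n) * (fact (Suc n + k) / fact (Suc n) * c (Suc n + k))"
    by (simp only: Suc)
  also have "\<dots> = fact (n + Suc k) / fact n * c (n + Suc k)"
    by (simp add: fact_Suc[of n] del: fact_Suc)
  finally show ?case .
qed simp

lemma higher_deriv_powser_real:
  fixes c :: "nat \<Rightarrow> real"
  assumes "\<And>y. summable (\<lambda>n. c n * y ^ n)"
  shows "(deriv ^^ k) (\<lambda>x. \<Sum>n. c n * x ^ n) = (\<lambda>x. \<Sum>n. (diffs ^^ k) c n * x ^ n)"
  using assms
proof (induction k arbitrary: c)
  case (Suc k)
  have "deriv (\<lambda>x. \<Sum>n. c n * x ^ n) = (\<lambda>x. \<Sum>n. diffs c n * x ^ n)"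
    using Suc.prems by (intro ext DERIV_imp_deriv termdiffs_strong_converges_everywhere)
  with Suc show ?case
    by (simp add: funpow_Suc_right termdiff_converges_all del: funpow.simps)
qed simp

lemma higher_deriv_powser_real_at_0:
  fixes c :: "nat \<Rightarrow> real"
  assumes "\<And>y. summable (\<lambda>n. c n * y ^ n)"
  shows "(deriv ^^ k) (\<lambda>x. \<Sum>n. c n * x ^ n) 0 = fact k * c k"
proof -
  have "(deriv ^^ k) (\<lambda>x. \<Sum>n. c n * x ^ n) 0 = (diffs ^^ k) c 0"
    by (simp only: higher_deriv_powser_real[OF assms] powser_zero)
  then show ?thesis
    by (simp add: funpow_diffs)
qed

definition F1_coeff :: "nat \<Rightarrow> real" where
  "F1_coeff n = (-1) ^ n / fact (Suc n)"

lemma F1_sums: "(\<lambda>n. F1_coeff n * y ^ n) sums F1 y"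
proof (cases "y = 0")
  case True
  then show ?thesis
    using powser_sums_zero[of F1_coeff] by (simp add: F1_def F1_coeff_def)
next
  case False
  have "(\<lambda>n. (-y) ^ Suc n /\<^sub>R fact (Suc n)) sums (exp (-y) - 1)"
    using exp_converges[of "-y"] by (subst sums_Suc_iff) simp
  then have "(\<lambda>n. (-y) ^ Suc n /\<^sub>R fact (Suc n) / (-y)) sums ((exp (-y) - 1) / (-y))"
    by (rule sums_divide)
  moreover have "(-y) ^ Suc n /\<^sub>R fact (Suc n) / (-y) = F1_coeff n * y ^ n" for n
    using False by (simp add: F1_coeff_def power_minus[of y n] divide_inverse mult_ac del: fact_Suc)
  moreover have "(exp (-y) - 1) / (-y) = F1 y"
    using False by (simp add: F1_def minus_divide_left)
  ultimately show ?thesis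
    by simp
qed

lemma summable_F1_coeff: "summable (\<lambda>n. F1_coeff n * y ^ n)"
  using F1_sums by (rule sums_summable)

lemma F1_eq_powser: "F1 = (\<lambda>x. \<Sum>n. F1_coeff n * x ^ n)"
  using F1_sums by (auto intro!: ext sums_unique)

lemma differentiable_upto_F1: "differentiable_upto n F1"
  unfolding F1_eq_powser by (rule differentiable_upto_powser[OF summable_F1_coeff])

lemma higher_deriv_F1_at_0: "(deriv ^^ k) F1 0 = (-1) ^ k / real (Suc k)"
  unfolding F1_eq_powser higher_deriv_powser_real_at_0[OF summable_F1_coeff]
  by (simp add: F1_coeff_def fact_Suc del: of_nat_Suc)

lemma F1_nonzero: "F1 v \<noteq> 0"
  by (auto simp: F1_def)

lemma G_eq_power_mult_inverse_F1: "j \<ge> 1 \<Longrightarrow> G j = (\<lambda>v. v ^ (j - 1) * inverse (F1 v))"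
proof
  fix v :: real
  assume "j \<ge> 1"
  then have "v ^ j = v ^ (j - 1) * v"
    by (simp add: power_Suc2 [symmetric])
  with \<open>j \<ge> 1\<close> show "G j v = v ^ (j - 1) * inverse (F1 v)"
    by (auto simp: G_def F1_def)
qed

lemma G_eq_power_mult_G_1: "j \<ge> 1 \<Longrightarrow> G j = (\<lambda>v. v ^ (j - 1) * G 1 v)"
  by (simp add: G_eq_power_mult_inverse_F1)

lemma differentiable_upto_G: "j \<ge> 1 \<Longrightarrow> differentiable_upto n (G j)"
  unfolding G_eq_power_mult_inverse_F1
  by (intro differentiable_upto_mult differentiable_upto_power differentiable_upto_inverse
        differentiable_upto_F1 F1_nonzero)

lemma G_mult_F1: "j \<ge> 1 \<Longrightarrow> G j v * F1 v = v ^ (j - 1)"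
  by (simp add: G_eq_power_mult_inverse_F1 F1_nonzero)

lemma leibniz_G_mult_F1:
  assumes "j \<ge> 1"
  shows "(\<Sum>i\<le>k. of_nat (k choose i) * ((deriv ^^ i) (G j) v * (deriv ^^ (k - i)) F1 v))
         = falling (real (j - 1)) k * v ^ (j - 1 - k)"
proof -
  have "(\<lambda>v. G j v * F1 v) = (\<lambda>v. v ^ (j - 1))"
    using G_mult_F1[OF assms] by simp
  then have "(deriv ^^ k) (\<lambda>v. G j v * F1 v) v = (deriv ^^ k) (\<lambda>v. v ^ (j - 1)) v"
    by simp
  then show ?thesis
    by (simp only: higher_deriv_mult_real[OF differentiable_upto_G[OF assms] differentiable_upto_F1]
        higher_deriv_power_real)
qed

definition leibniz_mat :: "(real \<Rightarrow> real) \<Rightarrow> nat \<Rightarrow> real \<Rightarrow> real mat" where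
  "leibniz_mat h k v = mat (Suc k) (Suc k)
     (\<lambda>(i, l). if l \<le> i then real (i choose l) * (deriv ^^ (i - l)) h v else 0)"

lemma leibniz_mat_carrier: "leibniz_mat h k v \<in> carrier_mat (Suc k) (Suc k)"
  by (simp add: leibniz_mat_def)

lemma det_leibniz_mat: "det (leibniz_mat h k v) = h v ^ Suc k"
proof -
  have "diag_mat (leibniz_mat h k v) = replicate (Suc k) (h v)"
    by (rule nth_equalityI) (auto simp: diag_mat_def leibniz_mat_def simp del: upt_Suc replicate_Suc)
  then show ?thesis
    by (subst det_lower_triangular[OF _ leibniz_mat_carrier])
       (auto simp: leibniz_mat_def prod_list_replicate)
qed

lemma leibniz_mat_mult_higher_derivs:
  assumes "differentiable_upto k g" "differentiable_upto k h"
  shows "leibniz_mat h k v *\<^sub>v vec (Suc k) (\<lambda>i. (deriv ^^ i) g v)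
         = vec (Suc k) (\<lambda>i. (deriv ^^ i) (\<lambda>x. g x * h x) v)"
proof (rule eq_vecI)
  fix i
  assume "i < dim_vec (vec (Suc k) (\<lambda>i. (deriv ^^ i) (\<lambda>x. g x * h x) v))"
  then have i: "i \<le> k"
    by simp
  have "(leibniz_mat h k v *\<^sub>v vec (Suc k) (\<lambda>i. (deriv ^^ i) g v)) $ i
        = (\<Sum>l<Suc k. if l \<le> i then real (i choose l) * ((deriv ^^ l) g v * (deriv ^^ (i - l)) h v) else 0)"
    using i by (auto simp: leibniz_mat_def mult_mat_vec_def scalar_prod_def lessThan_atLeast0
        intro!: sum.cong)
  also have "\<dots> = (\<Sum>l\<in>{..<Suc k} \<inter> {..i}.
                      real (i choose l) * ((deriv ^^ l) g v * (deriv ^^ (i - l)) h v))"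
    by (simp add: sum.inter_restrict)
  also have "\<dots> = (deriv ^^ i) (\<lambda>x. g x * h x) v"
  proof -
    have "{..<Suc k} \<inter> {..i} = {..i}"
      using i by auto
    then show ?thesis
      using assms i by (simp add: higher_deriv_mult_real differentiable_upto_mono)
  qed
  finally show "(leibniz_mat h k v *\<^sub>v vec (Suc k) (\<lambda>i. (deriv ^^ i) g v)) $ i
                = vec (Suc k) (\<lambda>i. (deriv ^^ i) (\<lambda>x. g x * h x) v) $ i"
    using i by simp
qed (simp add: leibniz_mat_def)

lemma det_swap_col_to_front_replace_col_last:
  fixes A :: "'a :: comm_ring_1 mat"
  assumes "A \<in> carrier_mat (Suc k) (Suc k)" "x \<in> carrier_vec (Suc k)"
  shows "det (swap_col_to_front (replace_col A (A *\<^sub>v x) k) k) = (-1) ^ k * (x $ k * det A)"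
proof -
  have "replace_col A (A *\<^sub>v x) k \<in> carrier_mat (Suc k) (Suc k)"
    using assms(1) by (simp add: replace_col_def)
  then have "det (swap_col_to_front (replace_col A (A *\<^sub>v x) k) k)
             = (-1) ^ k * det (replace_col A (A *\<^sub>v x) k)"
    by (rule swap_col_to_front_det) simp
  also have "det (replace_col A (A *\<^sub>v x) k) = x $ k * det A"
    by (rule cramer_lemma_mat[OF assms]) simp
  finally show ?thesis .
qed

lemma swap_col_to_front_eq_M:
  assumes "j \<ge> 1"
  shows "swap_col_to_front
           (replace_col (leibniz_mat F1 k v) (vec (Suc k) (\<lambda>i. (deriv ^^ i) (\<lambda>x. x ^ (j - 1)) v)) k) k
         = M j k v"
    (is "swap_col_to_front ?R k = _")
proof -
  have R: "?R \<in> carrier_mat (Suc k) (Suc k)"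
    by (simp add: leibniz_mat_def replace_col_def)
  have real_j: "real j - 1 = real (j - 1)"
    using assms by (simp add: of_nat_diff)
  have falling_0: "falling (real (j - 1)) i = 0" if "\<not> i < j" for i
    using assms that by (intro falling_of_nat_eq_0) simp
  show ?thesis
    unfolding swap_col_to_front_result[OF R lessI]
  proof (rule eq_matI)
    fix i l
    assume "i < dim_row (M j k v)" "l < dim_col (M j k v)"
    then have i: "i \<le> k" and l: "l \<le> k"
      by (simp_all add: M_def)
    show "mat (Suc k) (Suc k) (\<lambda>(i, l). if l = 0 then ?R $$ (i, k)
            else if l \<le> k then ?R $$ (i, l - 1) else ?R $$ (i, l)) $$ (i, l) = M j k v $$ (i, l)"
    proof (cases "l = 0")
      case True
      have "?R $$ (i, k) = falling (real (j - 1)) i * v ^ (j - 1 - i)"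
        using i by (simp add: replace_col_def leibniz_mat_def higher_deriv_power_real)
      moreover have "M j k v $$ (i, l) = (if i < j then falling (real j - 1) i * v ^ (j - 1 - i) else 0)"
        using i True by (simp add: M_def)
      ultimately show ?thesis
        using True i falling_0[of i] unfolding real_j by simp
    next
      case False
      then have "l - 1 < k"
        using l by linarith
      then have "?R $$ (i, l - 1)
                 = (if l - 1 \<le> i then real (i choose (l - 1)) * (deriv ^^ (i - (l - 1))) F1 v else 0)"
        using i by (simp add: replace_col_def leibniz_mat_def)
      moreover have "M j k v $$ (i, l)
                 = (if l - 1 \<le> i then real (i choose (l - 1)) * (deriv ^^ (i + 1 - l)) F1 v else 0)"
        using i l False by (simp add: M_def)
      moreover have "i - (l - 1) = i + 1 - l"
        using False by simp
      ultimately show ?thesis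
        using i l False by simp
    qed
  qed (simp_all add: M_def)
qed

lemma det_M:
  assumes "j \<ge> 1"
  shows "det (M j k v) = (-1) ^ k * ((deriv ^^ k) (G j) v * F1 v ^ Suc k)"
proof -
  let ?x = "vec (Suc k) (\<lambda>i. (deriv ^^ i) (G j) v)"
  have "leibniz_mat F1 k v *\<^sub>v ?x = vec (Suc k) (\<lambda>i. (deriv ^^ i) (\<lambda>x. x ^ (j - 1)) v)"
    using leibniz_mat_mult_higher_derivs[OF differentiable_upto_G[OF assms] differentiable_upto_F1]
    by (simp add: G_mult_F1[OF assms])
  then have "M j k v = swap_col_to_front (replace_col (leibniz_mat F1 k v) (leibniz_mat F1 k v *\<^sub>v ?x) k) k"
    using swap_col_to_front_eq_M[OF assms] by simp
  then show ?thesis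
    by (simp add: det_swap_col_to_front_replace_col_last[OF leibniz_mat_carrier] det_leibniz_mat)
qed

lemma higher_deriv_G_eq_det_M:
  "j \<ge> 1 \<Longrightarrow> (deriv ^^ k) (G j) v = (-1) ^ k / F1 v ^ (k + 1) * det (M j k v)"
  by (simp add: det_M F1_nonzero)

lemma higher_deriv_G_1_at_0:
  shows "(deriv ^^ 0) (G 1) 0 = 1" "(deriv ^^ 1) (G 1) 0 = 1 / 2"
    and "(deriv ^^ 2) (G 1) 0 = 1 / 6" "(deriv ^^ 3) (G 1) 0 = 0"
proof -
  define g where "g m = (deriv ^^ m) (G 1) 0" for m
  (* G_1 F_1 = 1, so the Leibniz expansion of its k-th derivative vanishes for k > 0 *)
  have rec: "(\<Sum>i\<le>k. real (k choose i) * (g i * ((-1) ^ (k - i) / real (Suc (k - i)))))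
             = (if k = 0 then 1 else 0)" for k
    using leibniz_G_mult_F1[of 1 k 0]
    by (simp add: g_def higher_deriv_F1_at_0 falling_of_nat_eq_0 falling_def)
  have "g 0 = 1"
    using rec[of 0] by simp
  moreover have "g 1 = 1 / 2"
    using rec[of 1] \<open>g 0 = 1\<close> by simp
  moreover have "g 2 = 1 / 6"
    using rec[of 2] \<open>g 0 = 1\<close> \<open>g 1 = 1 / 2\<close> by (simp add: numeral_2_eq_2)
  moreover have "g 3 = 0"
    using rec[of 3] \<open>g 0 = 1\<close> \<open>g 1 = 1 / 2\<close> \<open>g 2 = 1 / 6\<close>
    by (simp add: numeral_3_eq_3 numeral_2_eq_2)
  ultimately show "(deriv ^^ 0) (G 1) 0 = 1" "(deriv ^^ 1) (G 1) 0 = 1 / 2"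
    and "(deriv ^^ 2) (G 1) 0 = 1 / 6" "(deriv ^^ 3) (G 1) 0 = 0"
    by (simp_all add: g_def)
qed

lemma higher_deriv_G_at_0:
  assumes "j \<ge> 1"
  shows "k < j - 1 \<Longrightarrow> (deriv ^^ k) (G j) 0 = 0"
    and "(deriv ^^ (j - 1 + m)) (G j) 0 = fact (j - 1 + m) / fact m * (deriv ^^ m) (G 1) 0"
proof -
  have deriv_G: "(deriv ^^ k) (G j) 0
      = (if j - 1 \<le> k then real (k choose (j - 1)) * fact (j - 1) * (deriv ^^ (k - (j - 1))) (G 1) 0
         else 0)" for k
    unfolding G_eq_power_mult_G_1[OF assms]
    by (rule higher_deriv_power_mult_at_0[OF differentiable_upto_G]) simp
  then show "k < j - 1 \<Longrightarrow> (deriv ^^ k) (G j) 0 = 0"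
    by simp
  show "(deriv ^^ (j - 1 + m)) (G j) 0 = fact (j - 1 + m) / fact m * (deriv ^^ m) (G 1) 0"
    by (simp add: deriv_G binomial_fact)
qed

theorem theorem5p1:
  fixes j :: nat
  assumes "j \<ge> 1"
  shows "(\<forall>k v. (deriv ^^ k) (G j) v = (-1) ^ k / (F1 v) ^ (k + 1) * det (M j k v))
       \<and> (\<forall>v. f j v = (-1) ^ j / (F1 v) ^ (j + 1) * det (M j j v))
       \<and> (\<forall>k < j - 1. (deriv ^^ k) (G j) 0 = 0)
       \<and> (deriv ^^ (j - 1)) (G j) 0 = fact (j - 1)
       \<and> (deriv ^^ j) (G j) 0 = fact j / 2
       \<and> f j 0 = fact j / 2
       \<and> (deriv ^^ (j + 1)) (G j) 0 = fact (j + 1) / 12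
       \<and> deriv (f j) 0 = fact (j + 1) / 12
       \<and> (deriv ^^ (j + 2)) (G j) 0 = 0"
proof -
  note value_at_0 = higher_deriv_G_at_0(2)[OF assms]
  have "(deriv ^^ (j - 1)) (G j) 0 = fact (j - 1)"
    using value_at_0[of 0] unfolding higher_deriv_G_1_at_0 by simp
  moreover have "(deriv ^^ j) (G j) 0 = fact j / 2"
    using value_at_0[of 1] assms unfolding higher_deriv_G_1_at_0 by simp
  moreover have "(deriv ^^ (j + 1)) (G j) 0 = fact (j + 1) / 12"
    using value_at_0[of 2] assms unfolding higher_deriv_G_1_at_0 by simp
  moreover have "(deriv ^^ (j + 2)) (G j) 0 = 0"
    using value_at_0[of 3] assms unfolding higher_deriv_G_1_at_0 by simp
  moreover have "deriv (f j) 0 = (deriv ^^ (j + 1)) (G j) 0"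
    by (simp add: f_def)
  ultimately show ?thesis
    using higher_deriv_G_eq_det_M[OF assms] higher_deriv_G_at_0(1)[OF assms]
    by (simp add: f_def)
qed

end
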